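(* Let $\{\varphi_i\}_{i=1}^M\subset\mathbb{R}^N$ be a set of nonzero vectors. If the family of hyperplanes $\{\varphi_i^\perp\}_{i=1}^M$ does norm retrieval, then either $\{\varphi_i\}_{i=1}^M$ spans $\mathbb{R}^N$ or $\{\varphi_i\}_{i=1}^M$ is linearly dependent.
   Context: For a nonzero vector $\varphi\in\mathbb{R}^N$, $\varphi^\perp=\{x\in\mathbb{R}^N:\langle x,\varphi\rangle=0\}$. A family of subspaces $\{W_i\}_{i=1}^M$ of $\mathbb{R}^N$ with orthogonal projections $\{P_i\}_{i=1}^M$ does norm retrieval if for all $x,y\in\mathbb{R}^N$, $\|P_ix\|=\|P_iy\|$ for all $i$ implies $\|x\|=\|y\|$. *)

theory Defs
  imports "HOL-Analysis.Analysis"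
begin

definition perp :: "'a::real_inner \<Rightarrow> 'a set" where
  "perp v = {x. inner x v = 0}"

definition orth_proj :: "'a::euclidean_space set \<Rightarrow> 'a \<Rightarrow> 'a" where
  "orth_proj W x = (THE p. p \<in> W \<and> (\<forall>w\<in>W. inner (x - p) w = 0))"

definition norm_retrieval :: "nat \<Rightarrow> (nat \<Rightarrow> 'a::euclidean_space set) \<Rightarrow> bool" where
  "norm_retrieval M W \<longleftrightarrow>
     (\<forall>x y. (\<forall>i<M. norm (orth_proj (W i) x) = norm (orth_proj (W i) y)) \<longrightarrow> norm x = norm y)"

text \<open>Linear dependence of a finite family (repetitions count as dependence).\<close>
definition family_dependent :: "nat \<Rightarrow> (nat \<Rightarrow> 'a::real_vector) \<Rightarrow> bool" where
  "family_dependent M \<phi> \<longleftrightarrow>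
     (\<exists>c. (\<exists>i<M. c i \<noteq> 0) \<and> (\<Sum>i<M. c i *\<^sub>R \<phi> i) = 0)"

end

theory Submission
  imports Defs
begin

text \<open>
  Suppose the \<open>\<phi>\<^sub>i\<close> are independent and do not span. Independence gives a vector \<open>a\<close> in
  their span with \<open>\<langle>a, \<phi>\<^sub>i\<rangle> = \<parallel>\<phi>\<^sub>i\<parallel>\<close> for all \<open>i\<close>, and non-spanning a unit vector \<open>u\<close>
  orthogonal to all of them. Since the projection onto \<open>\<phi>\<^sub>i\<^sup>\<bottom>\<close> satisfies
  \<open>\<parallel>P\<^sub>i x\<parallel>\<^sup>2 = \<parallel>x\<parallel>\<^sup>2 - \<langle>x, \<phi>\<^sub>i\<rangle>\<^sup>2 / \<parallel>\<phi>\<^sub>i\<parallel>\<^sup>2\<close>, both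
  \<open>a + u\<close> and \<open>\<parallel>a\<parallel> u\<close> have all projections of norm \<open>\<parallel>a\<parallel>\<close>, while their squared norms
  differ by one.
\<close>

lemma orth_proj_perp:
  fixes v x :: "'a::euclidean_space"
  assumes "v \<noteq> 0"
  shows "orth_proj (perp v) x = x - (inner x v / inner v v) *\<^sub>R v"
proof -
  let ?p = "x - (inner x v / inner v v) *\<^sub>R v"
  have p: "?p \<in> perp v \<and> (\<forall>w\<in>perp v. inner (x - ?p) w = 0)"
    using assms by (auto simp: perp_def inner_diff_left inner_diff_right inner_commute)
  show ?thesis
    unfolding orth_proj_def
  proof (rule the_equality)
    fix q
    assume q: "q \<in> perp v \<and> (\<forall>w\<in>perp v. inner (x - q) w = 0)"
    have d: "?p - q \<in> perp v"
      using p q by (auto simp: perp_def inner_diff_left)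
    have "inner (?p - q) (?p - q) = inner ((x - q) - (x - ?p)) (?p - q)"
      by (simp add: algebra_simps)
    also have "\<dots> = inner (x - q) (?p - q) - inner (x - ?p) (?p - q)"
      by (rule inner_diff_left)
    also have "\<dots> = 0"
      using p q d by (simp only: diff_self)
    finally show "q = ?p"
      by simp
  qed (fact p)
qed

lemma norm_orth_proj_perp_squared:
  fixes v x :: "'a::euclidean_space"
  assumes "v \<noteq> 0"
  shows "(norm (orth_proj (perp v) x))\<^sup>2 = (norm x)\<^sup>2 - (inner x v / norm v)\<^sup>2"
proof -
  define c where "c = inner x v / inner v v"
  have "inner v v \<noteq> 0"
    using assms by simp
  have "(norm (x - c *\<^sub>R v))\<^sup>2 = inner x x - 2 * c * inner x v + c\<^sup>2 * inner v v"
    unfolding power2_norm_eq_inner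
    by (simp add: inner_diff_left inner_diff_right inner_commute power2_eq_square algebra_simps)
  also have "\<dots> = inner x x - (inner x v)\<^sup>2 / inner v v"
    using \<open>inner v v \<noteq> 0\<close> by (simp add: c_def power2_eq_square field_simps)
  finally show ?thesis
    using assms by (simp add: orth_proj_perp c_def power2_norm_eq_inner power_divide)
qed

lemma independent_image_if_not_family_dependent:
  fixes \<phi> :: "nat \<Rightarrow> 'a::real_vector"
  assumes "\<not> family_dependent M \<phi>"
  shows "independent (\<phi> ` {..<M})"
proof -
  have inj: "inj_on \<phi> {..<M}"
  proof (rule inj_onI, rule ccontr)
    fix i k
    assume ik: "i \<in> {..<M}" "k \<in> {..<M}" "\<phi> i = \<phi> k" "i \<noteq> k"
    define c where "c = (\<lambda>j. if j = i then 1 else if j = k then -1 else 0 :: real)"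
    have "(\<Sum>j<M. c j *\<^sub>R \<phi> j) = (\<Sum>j\<in>{i, k}. c j *\<^sub>R \<phi> j)"
      by (rule sum.mono_neutral_right) (use ik in \<open>auto simp: c_def\<close>)
    also have "\<dots> = 0"
      using ik by (simp add: c_def)
    finally have "family_dependent M \<phi>"
      unfolding family_dependent_def using ik by (intro exI[of _ c]) (auto simp: c_def)
    with assms show False
      by contradiction
  qed
  show ?thesis
  proof
    assume "dependent (\<phi> ` {..<M})"
    then obtain u where u: "\<exists>v\<in>\<phi> ` {..<M}. u v \<noteq> 0" "(\<Sum>v\<in>\<phi> ` {..<M}. u v *\<^sub>R v) = 0"
      by (auto simp: dependent_finite)
    then have "(\<Sum>j<M. u (\<phi> j) *\<^sub>R \<phi> j) = 0"
      by (simp add: sum.reindex[OF inj])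
    then have "family_dependent M \<phi>"
      unfolding family_dependent_def using u(1) by (intro exI[of _ "u \<circ> \<phi>"]) auto
    with assms show False
      by contradiction
  qed
qed

text \<open>
  The component of \<open>b\<close> orthogonal to the span of the other vectors of \<open>B\<close> is nonzero by
  independence and lies in \<open>span B\<close>; rescaled it is the dual vector of \<open>b\<close>.
\<close>

lemma independent_dual_vector:
  fixes B :: "'a::euclidean_space set"
  assumes "independent B" "b \<in> B"
  obtains v where "v \<in> span B" "inner v b = 1" "\<And>b'. b' \<in> B - {b} \<Longrightarrow> inner v b' = 0"
proof -
  obtain y z where y: "y \<in> span (B - {b})"
    and z: "\<And>w. w \<in> span (B - {b}) \<Longrightarrow> orthogonal z w" and b: "b = y + z"
    using orthogonal_subspace_decomp_exists[of "B - {b}" b] by blast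
  have "b \<notin> span (B - {b})"
    using assms by (auto simp: dependent_def)
  with y b have "z \<noteq> 0"
    by auto
  have "z = b - y"
    using b by simp
  moreover have "y \<in> span B"
    using y span_mono[of "B - {b}" B] by blast
  ultimately have "z \<in> span B"
    using assms(2) by (simp add: span_base span_diff)
  moreover have "inner z b = inner z z"
    using z[OF y] b by (simp add: orthogonal_def inner_add_right)
  ultimately show ?thesis
    using \<open>z \<noteq> 0\<close> z
    by (intro that[of "(1 / inner z z) *\<^sub>R z"])
      (auto simp: span_scale orthogonal_def intro: span_base)
qed

lemma independent_interpolation:
  fixes B :: "'a::euclidean_space set"
  assumes "independent B"
  obtains a where "a \<in> span B" "\<And>b. b \<in> B \<Longrightarrow> inner a b = c b"
proof -
  have "\<forall>b\<in>B. \<exists>v. v \<in> span B \<and> inner v b = 1 \<and> (\<forall>b'\<in>B - {b}. inner v b' = 0)"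
    by (metis independent_dual_vector[OF assms])
  then obtain v where v: "\<forall>b\<in>B. v b \<in> span B \<and> inner (v b) b = 1 \<and>
      (\<forall>b'\<in>B - {b}. inner (v b) b' = 0)"
    by (rule bchoice[THEN exE])
  define a where "a = (\<Sum>b'\<in>B. c b' *\<^sub>R v b')"
  have "finite B"
    using assms by (rule finiteI_independent)
  have "inner a b = c b" if "b \<in> B" for b
  proof -
    have "inner a b = (\<Sum>b'\<in>B. c b' * inner (v b') b)"
      by (simp add: a_def inner_sum_left)
    also have "\<dots> = (\<Sum>b'\<in>{b}. c b' * inner (v b') b)"
      by (rule sum.mono_neutral_right) (use \<open>finite B\<close> that v in auto)
    finally show ?thesis
      using v that by simp
  qed
  moreover have "a \<in> span B"
    unfolding a_def using v by (intro span_sum span_scale) auto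
  ultimately show ?thesis
    using that by blast
qed

lemma span_not_UNIV_orthogonal_unit:
  fixes S :: "'a::euclidean_space set"
  assumes "span S \<noteq> UNIV"
  obtains u where "norm u = 1" "\<And>s. s \<in> span S \<Longrightarrow> inner u s = 0"
proof -
  obtain w where "w \<noteq> 0" and "\<forall>s\<in>span S. inner w s = 0"
    using span_not_UNIV_orthogonal[OF assms] by blast
  then show ?thesis
    by (intro that[of "w /\<^sub>R norm w"]) simp_all
qed

lemma perp_hyperplanes_not_norm_retrieval:
  fixes \<phi> :: "nat \<Rightarrow> 'a::euclidean_space"
  assumes nonzero: "\<forall>i<M. \<phi> i \<noteq> 0"
    and a: "\<forall>i<M. inner a (\<phi> i) = norm (\<phi> i)" and u: "\<forall>i<M. inner u (\<phi> i) = 0"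
    and "orthogonal a u" and "norm u = 1"
  shows "\<not> norm_retrieval M (\<lambda>i. perp (\<phi> i))"
proof
  let ?P = "\<lambda>i. orth_proj (perp (\<phi> i))"
  assume "norm_retrieval M (\<lambda>i. perp (\<phi> i))"
  moreover have "norm (?P i (a + u)) = norm (?P i (norm a *\<^sub>R u))" if "i < M" for i
  proof -
    have "\<phi> i \<noteq> 0" and a\<^sub>i: "inner a (\<phi> i) = norm (\<phi> i)" and u\<^sub>i: "inner u (\<phi> i) = 0"
      using that nonzero a u by auto
    have "(norm (?P i (a + u)))\<^sup>2 = (norm a)\<^sup>2 + 1 - (norm (\<phi> i) / norm (\<phi> i))\<^sup>2"
      using norm_orth_proj_perp_squared[OF \<open>\<phi> i \<noteq> 0\<close>, of "a + u"]
        norm_add_Pythagorean[OF \<open>orthogonal a u\<close>] a\<^sub>i u\<^sub>i \<open>norm u = 1\<close>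
      by (simp add: inner_add_left)
    also have "\<dots> = (norm (?P i (norm a *\<^sub>R u)))\<^sup>2"
      using norm_orth_proj_perp_squared[OF \<open>\<phi> i \<noteq> 0\<close>, of "norm a *\<^sub>R u"]
        \<open>\<phi> i \<noteq> 0\<close> u\<^sub>i \<open>norm u = 1\<close>
      by simp
    finally have "(norm (?P i (a + u)))\<^sup>2 = (norm (?P i (norm a *\<^sub>R u)))\<^sup>2" .
    then show ?thesis
      by (simp add: power2_eq_iff_nonneg)
  qed
  ultimately have "norm (a + u) = norm (norm a *\<^sub>R u)"
    unfolding norm_retrieval_def by blast
  then have "(norm a)\<^sup>2 + 1 = (norm a)\<^sup>2"
    using norm_add_Pythagorean[OF \<open>orthogonal a u\<close>] \<open>norm u = 1\<close> by simp
  then show False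
    by simp
qed

theorem mainTheorem3:
  fixes \<phi> :: "nat \<Rightarrow> real ^ 'n" and M :: nat
  assumes nonzero: "\<forall>i<M. \<phi> i \<noteq> 0"
    and nr: "norm_retrieval M (\<lambda>i. perp (\<phi> i))"
  shows "span (\<phi> ` {..<M}) = UNIV \<or> family_dependent M \<phi>"
proof (rule ccontr)
  let ?B = "\<phi> ` {..<M}"
  assume "\<not> ?thesis"
  then have "independent ?B" and "span ?B \<noteq> UNIV"
    by (simp_all add: independent_image_if_not_family_dependent)
  obtain a where "a \<in> span ?B" and a: "\<And>b. b \<in> ?B \<Longrightarrow> inner a b = norm b"
    using independent_interpolation[OF \<open>independent ?B\<close>, where c = norm] by blast
  obtain u where "norm u = 1" and u: "\<And>s. s \<in> span ?B \<Longrightarrow> inner u s = 0"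
    using span_not_UNIV_orthogonal_unit[OF \<open>span ?B \<noteq> UNIV\<close>] by blast
  have "\<forall>i<M. inner a (\<phi> i) = norm (\<phi> i)" and "\<forall>i<M. inner u (\<phi> i) = 0"
    by (simp_all add: a u span_base)
  moreover have "orthogonal a u"
    using u[OF \<open>a \<in> span ?B\<close>] by (simp add: orthogonal_def inner_commute)
  ultimately have "\<not> norm_retrieval M (\<lambda>i. perp (\<phi> i))"
    using nonzero \<open>norm u = 1\<close> by (simp add: perp_hyperplanes_not_norm_retrieval)
  with nr show False
    by contradiction
qed

end
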